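(* (Fundamental Theorem of Calculus) For every $u\in\mathfrak{U}(\mathbb{R})$ and every $a,b\in\Gamma$ with $a<b$, $$\int_a^bDu(x)\,dx=u(b)-u(a).$$
   Context: Framework (Λ-limits / nonstandard analysis): $\mathfrak{X}=\mathcal{P}_{fin}(\mathfrak{F}(\mathbb{R},\mathbb{R}))$ directed by inclusion; $\mathbb{R}^*\supset\mathbb{R}$ is a non-Archimedean ordered field of Λ-limits of nets $\mathfrak{X}\to\mathbb{R}$; internal sets/functions, natural extensions $E^*,f^*$, hyperfinite sums are defined via Λ-limits; for internal $u$, $\int_a^bu\,dx$ means $(\int_a^b)^*u\,dx$, the natural extension of the Lebesgue definite integral. For $\lambda\in\mathfrak{X}$, $V_\lambda$ is the span of $\lambda$; an internal $u=\lim_{\lambda\uparrow\Lambda}u_\lambda$ is an ultrafunction if $u_\lambda\in V_\lambda$ for all $\lambda$; for a vector space $W$ of real functions, $\widetilde{W}=W^*\cap\{\text{ultrafunctions}\}$. Grid: a positive infinite $\beta\in\mathbb{R}^*$, a hyperfinite $\Gamma=\{\gamma_0<\dots<\gamma_\ell\}\subset\mathbb{R}^*$ with $\gamma_0=-\beta$, $\gamma_\ell=\beta$, $0<\gamma_{j+1}-\gamma_j<\eta$ for a fixed infinitesimal $\eta$, and $\mathbb{R}\subseteq\Gamma$; $\mathbb{I}_j=(\gamma_j,\gamma_{j+1})_{\mathbb{R}^*}$ with characteristic function $\chi_j$. $\mathfrak{U}(\mathbb{R})$: functions $u:[-\beta,\beta]\to\mathbb{R}^*$ of the form $\sum_{j=0}^{\ell-1}v_j\chi_j$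 with $v_j\in\widetilde{\mathcal{C}^1(\mathbb{R})}$, with the $L^2$ inner product $\int^*uv$. $u(\gamma_j^\pm)$ are internal one-sided limits at grid points; values at grid points: $u(\gamma_j)=\tfrac12(u(\gamma_j^+)+u(\gamma_j^-))$ for $1\le j\le\ell-1$, $u(-\beta)=u(\gamma_0^+)$, $u(\beta)=u(\gamma_\ell^-)$. For $q\in[-\beta,\beta]$, $\delta_q$ is the unique element of $\mathfrak{U}(\mathbb{R})$ with $\int^*w\delta_q=w(q)$ for all $w\in\mathfrak{U}(\mathbb{R})$. Derivative: for $u=\sum_jv_j\chi_j\in\mathfrak{U}(\mathbb{R})$, $u'=\sum_jv_j'\chi_j$ (piecewise derivative), $P_{\mathfrak{U}}$ the orthogonal projection onto $\mathfrak{U}(\mathbb{R})$, $\triangle u(\gamma_j)=u(\gamma_j^+)-u(\gamma_j^-)$, and $Du=P_{\mathfrak{U}}u'+\sum_{j=1}^{\ell-1}\triangle u(\gamma_j)\delta_{\gamma_j}$. *)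

theory Defs
  imports "HOL-Analysis.Analysis"
begin

text \<open>Points of the directed set X are finite sets of functions real => real.
  An element of R* (or an internal object) is represented by a net indexed by X;
  Lambda-limits are taken along a fine ultrafilter Lam on X, so that two
  internal objects are equal iff the nets agree Lam-eventually.\<close>

type_synonym lam_idx = "(real \<Rightarrow> real) set"

definition is_ultrafilter :: "'a filter \<Rightarrow> bool" where
  "is_ultrafilter F \<longleftrightarrow> F \<noteq> bot \<and> (\<forall>P. eventually P F \<or> eventually (\<lambda>x. \<not> P x) F)"

definition fine_ultrafilter :: "lam_idx filter \<Rightarrow> bool" where
  "fine_ultrafilter Lam \<longleftrightarrow> is_ultrafilter Lam \<and> eventually finite Lam \<and>
     (\<forall>l0. finite l0 \<longrightarrow> eventually (\<lambda>l. l0 \<subseteq> l) Lam)"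

definition infinitesimal_net :: "lam_idx filter \<Rightarrow> (lam_idx \<Rightarrow> real) \<Rightarrow> bool" where
  "infinitesimal_net Lam x \<longleftrightarrow> (\<forall>e>0. eventually (\<lambda>l. \<bar>x l\<bar> < e) Lam)"

definition pos_infinite_net :: "lam_idx filter \<Rightarrow> (lam_idx \<Rightarrow> real) \<Rightarrow> bool" where
  "pos_infinite_net Lam x \<longleftrightarrow> (\<forall>M. eventually (\<lambda>l. x l > M) Lam)"

definition Vspan :: "lam_idx \<Rightarrow> (real \<Rightarrow> real) set" where
  "Vspan l = {f. \<exists>c. f = (\<lambda>x. \<Sum>g\<in>l. c g * g x)}"

definition VC1 :: "lam_idx \<Rightarrow> (real \<Rightarrow> real) set" where
  "VC1 l = Vspan l \<inter> {f. f C1_differentiable_on UNIV}"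

text \<open>The grid at level l is gam 0 < ... < gam L; I_j = (gam j, gam (j+1)).\<close>
definition pw :: "(nat \<Rightarrow> real) \<Rightarrow> nat \<Rightarrow> (nat \<Rightarrow> real \<Rightarrow> real) \<Rightarrow> real \<Rightarrow> real" where
  "pw gam L v x = (\<Sum>j<L. v j x * indicator {gam j<..<gam (Suc j)} x)"

definition UR :: "lam_idx \<Rightarrow> (nat \<Rightarrow> real) \<Rightarrow> nat \<Rightarrow> (real \<Rightarrow> real) set" where
  "UR l gam L = {pw gam L v | v. \<forall>j<L. v j \<in> VC1 l}"

text \<open>L^2 inner product on [-beta, beta] = [gam 0, gam L] (Lebesgue integral).\<close>
definition ipU :: "(nat \<Rightarrow> real) \<Rightarrow> nat \<Rightarrow> (real \<Rightarrow> real) \<Rightarrow> (real \<Rightarrow> real) \<Rightarrow> real" where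
  "ipU gam L f g = (LBINT x=gam 0..gam L. f x * g x)"

definition gval :: "(nat \<Rightarrow> real) \<Rightarrow> nat \<Rightarrow> (real \<Rightarrow> real) \<Rightarrow> real \<Rightarrow> real" where
  "gval gam L u q =
     (if q = gam 0 then Lim (at_right q) u
      else if q = gam L then Lim (at_left q) u
      else if q \<in> gam ` {1..<L} then (Lim (at_right q) u + Lim (at_left q) u) / 2
      else u q)"

definition deltaU :: "lam_idx \<Rightarrow> (nat \<Rightarrow> real) \<Rightarrow> nat \<Rightarrow> real \<Rightarrow> real \<Rightarrow> real" where
  "deltaU l gam L q = (THE d. d \<in> UR l gam L \<and> (\<forall>w\<in>UR l gam L. ipU gam L w d = gval gam L w q))"

definition projU :: "lam_idx \<Rightarrow> (nat \<Rightarrow> real) \<Rightarrow> nat \<Rightarrow> (real \<Rightarrow> real) \<Rightarrow> real \<Rightarrow> real" where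
  "projU l gam L f = (THE p. p \<in> UR l gam L \<and> (\<forall>w\<in>UR l gam L. ipU gam L (\<lambda>x. f x - p x) w = 0))"

definition pder :: "(nat \<Rightarrow> real) \<Rightarrow> nat \<Rightarrow> (real \<Rightarrow> real) \<Rightarrow> real \<Rightarrow> real" where
  "pder gam L u x = (\<Sum>j<L. deriv u x * indicator {gam j<..<gam (Suc j)} x)"

definition jumpU :: "(nat \<Rightarrow> real) \<Rightarrow> (real \<Rightarrow> real) \<Rightarrow> nat \<Rightarrow> real" where
  "jumpU gam u j = Lim (at_right (gam j)) u - Lim (at_left (gam j)) u"

definition DU :: "lam_idx \<Rightarrow> (nat \<Rightarrow> real) \<Rightarrow> nat \<Rightarrow> (real \<Rightarrow> real) \<Rightarrow> real \<Rightarrow> real" where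
  "DU l gam L u x = projU l gam L (pder gam L u) x
      + (\<Sum>j\<in>{1..<L}. jumpU gam u j * deltaU l gam L (gam j) x)"

end

theory Submission
  imports Defs "HOL-Library.Function_Algebras"
begin

text \<open>Everything happens at a single level of the net, where u, P_U, the deltas and Du are
  ordinary functions on the grid G 0 < ... < G n. Test Du against the function chi that is
  1 on the cells between a and b and 0 elsewhere; its pieces are constants, so chi lies in
  U(R) as soon as the constant 1 belongs to the level (fineness of the ultrafilter).
  Then the integral of Du over [a, b] is the inner product with chi, the projection P_U drops
  out, and the integral of u' is the sum over the cells of the increments of the pieces of u.
  Each delta at an interior grid point contributes the jump of u there times the value of chi,
  which is 1, 1/2 or 0. Half of each jump completes the increments on either side, and the
  resulting sum telescopes to the difference of the averaged values u(b) - u(a).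
  That P_U and the deltas, defined by description, really have their defining properties
  is a Riesz representation theorem on the finite-dimensional space U(R) of one level.\<close>

section \<open>Grids and piecewise functions\<close>

abbreviation cell :: "(nat \<Rightarrow> real) \<Rightarrow> nat \<Rightarrow> real set" where
  "cell G j \<equiv> {G j<..<G (Suc j)}"

lemma grid_less:
  assumes "\<forall>j<n. G j < G (Suc j)" "i < k" "k \<le> n"
  shows "G i < (G k :: real)"
  using assms(2,3)
proof (induction k)
  case (Suc k)
  then show ?case
    using assms(1) by (metis Suc_le_lessD less_Suc_eq less_imp_le_nat order.strict_trans)
qed simp

lemma grid_le:
  assumes "\<forall>j<n. G j < G (Suc j)" "i \<le> k" "k \<le> n"
  shows "G i \<le> (G k :: real)"
  using grid_less[OF assms(1)] assms(2,3) by (cases "i = k") (auto intro: less_imp_le)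

lemma grid_inj:
  assumes "\<forall>j<n. G j < G (Suc j)" "i \<le> n" "k \<le> n" "G i = (G k :: real)"
  shows "i = k"
  using grid_less[OF assms(1)] assms(2-4) by (metis less_irrefl nat_neq_iff)

lemma cell_unique:
  assumes "\<forall>j<n. G j < G (Suc j)" "i < n" "j < n" "x \<in> cell G i" "x \<in> cell G j"
  shows "i = j"
proof (rule ccontr)
  assume "i \<noteq> j"
  then consider "Suc i \<le> j" | "Suc j \<le> i" by linarith
  then show False
    by cases (use grid_le[OF assms(1)] assms in \<open>fastforce+\<close>)
qed

lemma sum_indicator_cell:
  assumes "\<forall>j<n. G j < G (Suc j)" "A \<subseteq> {..<n}" "j < n" "x \<in> cell G j"
  shows "(\<Sum>i\<in>A. f i * indicator (cell G i) x) = (if j \<in> A then f j else (0::real))"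
proof -
  have "(\<Sum>i\<in>A. f i * indicator (cell G i) x) = (\<Sum>i\<in>A. if i = j then f j else 0)"
    using cell_unique[OF assms(1) _ assms(3) _ assms(4)] assms(2,4)
    by (intro sum.cong) (auto simp: indicator_def)
  then show ?thesis
    using finite_subset[OF assms(2)] by simp
qed

lemma sum_indicator_outside_cells:
  assumes "A \<subseteq> {..<n}" "\<forall>j<n. x \<notin> cell G j"
  shows "(\<Sum>i\<in>A. f i * indicator (cell G i) x) = (0::real)"
  using assms by (intro sum.neutral) (auto simp: indicator_def)

lemma pw_cell:
  assumes "\<forall>j<n. G j < G (Suc j)" "j < n" "x \<in> cell G j"
  shows "pw G n v x = v j x"
  using sum_indicator_cell[OF assms(1) _ assms(2,3), of "{..<n}"] assms(2)
  by (simp add: pw_def)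

lemma pw_outside_cells:
  assumes "\<forall>j<n. x \<notin> cell G j"
  shows "pw G n v x = 0"
  unfolding pw_def using sum_indicator_outside_cells[OF _ assms, of "{..<n}"] by simp

lemma pw_lincomb:
  "(\<lambda>x. a * pw G n v x + b * pw G n w x) = pw G n (\<lambda>j x. a * v j x + b * w j x)"
proof
  fix x
  have "a * pw G n v x + b * pw G n w x
      = (\<Sum>j<n. a * (v j x * indicator (cell G j) x) + b * (w j x * indicator (cell G j) x))"
    by (simp only: pw_def sum_distrib_left sum.distrib)
  then show "a * pw G n v x + b * pw G n w x = pw G n (\<lambda>j x. a * v j x + b * w j x) x"
    by (simp add: pw_def algebra_simps)
qed

lemma pw_mult:
  assumes "\<forall>j<n. G j < G (Suc j)"
  shows "pw G n v x * pw G n w x = pw G n (\<lambda>j x. v j x * w j x) x"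
proof (cases "\<exists>j<n. x \<in> cell G j")
  case True
  then show ?thesis using pw_cell[OF assms] by auto
qed (simp add: pw_outside_cells)

lemma pw_zero: "pw G n (\<lambda>j x. 0) = (\<lambda>x. 0)"
  by (simp add: pw_def fun_eq_iff)

lemma Lim_at_right_pw:
  assumes st: "\<forall>j<n. G j < G (Suc j)" and j: "j < n" and cont: "isCont (v j) (G j)"
  shows "Lim (at_right (G j)) (pw G n v) = v j (G j)"
proof -
  have "eventually (\<lambda>x. v j x = pw G n v x) (at_right (G j))"
    using eventually_at_right_real[of "G j" "G (Suc j)"] st j
    by (auto elim!: eventually_mono simp: pw_cell[OF st j])
  moreover have "(v j \<longlongrightarrow> v j (G j)) (at_right (G j))"
    using cont by (simp add: isCont_def filterlim_at_split)
  ultimately have "(pw G n v \<longlongrightarrow> v j (G j)) (at_right (G j))"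
    by (rule Lim_transform_eventually[rotated])
  then show ?thesis by (intro tendsto_Lim) auto
qed

lemma Lim_at_left_pw:
  assumes st: "\<forall>j<n. G j < G (Suc j)" and j: "j < n" and cont: "isCont (v j) (G (Suc j))"
  shows "Lim (at_left (G (Suc j))) (pw G n v) = v j (G (Suc j))"
proof -
  have "eventually (\<lambda>x. v j x = pw G n v x) (at_left (G (Suc j)))"
    using eventually_at_left_real[of "G j" "G (Suc j)"] st j
    by (auto elim!: eventually_mono simp: pw_cell[OF st j])
  moreover have "(v j \<longlongrightarrow> v j (G (Suc j))) (at_left (G (Suc j)))"
    using cont by (simp add: isCont_def filterlim_at_split)
  ultimately have "(pw G n v \<longlongrightarrow> v j (G (Suc j))) (at_left (G (Suc j)))"
    by (rule Lim_transform_eventually[rotated])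
  then show ?thesis by (intro tendsto_Lim) auto
qed

text \<open>At a grid point G k the piece to the right is v (min k (n - 1)) and the piece to the
  left is v (k - 1); at the two end points, where only one of them is meaningful, the
  truncations make both coincide with it.\<close>

lemma gval_pw:
  assumes st: "\<forall>j<n. G j < G (Suc j)" and "0 < n" "k \<le> n"
    and cont: "\<forall>j<n. \<forall>x. isCont (v j) x"
  shows "gval G n (pw G n v) (G k) = (v (min k (n - 1)) (G k) + v (k - 1) (G k)) / 2"
proof -
  have right: "Lim (at_right (G k)) (pw G n v) = v k (G k)" if "k < n"
    using Lim_at_right_pw[OF st that] cont that by simp
  have left: "Lim (at_left (G k)) (pw G n v) = v (k - 1) (G k)" if "0 < k"
    using Lim_at_left_pw[OF st, of "k - 1" v] cont that \<open>k \<le> n\<close> by simp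
  consider "k = 0" | "k = n" | "0 < k" "k < n"
    using \<open>k \<le> n\<close> by linarith
  then show ?thesis
  proof cases
    case 1
    then show ?thesis using right \<open>0 < n\<close> by (simp add: gval_def)
  next
    case 2
    then have "G k \<noteq> G 0" using grid_inj[OF st, of k 0] \<open>0 < n\<close> by auto
    then show ?thesis using left \<open>0 < n\<close> 2 by (simp add: gval_def)
  next
    case 3
    then have "G k \<noteq> G 0" "G k \<noteq> G n" "G k \<in> G ` {1..<n}"
      using grid_inj[OF st, of k 0] grid_inj[OF st, of k n] by auto
    then show ?thesis using left right 3 by (simp add: gval_def)
  qed
qed

lemma jumpU_pw:
  assumes st: "\<forall>j<n. G j < G (Suc j)" and "0 < k" "k < n"
    and cont: "\<forall>j<n. \<forall>x. isCont (v j) x"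
  shows "jumpU G (pw G n v) k = v k (G k) - v (k - 1) (G k)"
  using Lim_at_left_pw[OF st, of "k - 1" v] Lim_at_right_pw[OF st, of k v] cont assms(2,3)
  by (simp add: jumpU_def)

lemma pder_pw:
  assumes st: "\<forall>j<n. G j < G (Suc j)"
  shows "pder G n (pw G n v) = pw G n (\<lambda>j. deriv (v j))"
proof
  fix x
  show "pder G n (pw G n v) x = pw G n (\<lambda>j. deriv (v j)) x"
  proof (cases "\<exists>j<n. x \<in> cell G j")
    case True
    then obtain j where j: "j < n" "x \<in> cell G j" by blast
    have "eventually (\<lambda>y. pw G n v y = v j y) (nhds x)"
      using eventually_nhds_in_open[of "cell G j" x] j
      by (auto elim!: eventually_mono simp: pw_cell[OF st j(1)])
    then have "deriv (pw G n v) x = deriv (v j) x"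
      by (rule deriv_cong_ev) simp
    moreover have "pder G n (pw G n v) x = (if j \<in> {..<n} then deriv (pw G n v) x else 0)"
      unfolding pder_def by (rule sum_indicator_cell[OF st _ j]) auto
    ultimately show ?thesis using pw_cell[OF st j] j(1) by simp
  next
    case False
    then show ?thesis
      unfolding pder_def using sum_indicator_outside_cells[of "{..<n}" n x G]
      by (simp add: pw_outside_cells)
  qed
qed

section \<open>Integrals of piecewise continuous functions\<close>

definition PWC :: "(nat \<Rightarrow> real) \<Rightarrow> nat \<Rightarrow> (real \<Rightarrow> real) set" where
  "PWC G n = {pw G n v | v. \<forall>j<n. continuous_on UNIV (v j)}"

lemma interval_integrable_continuous_on_UNIV:
  fixes a b :: real and f :: "real \<Rightarrow> real"
  assumes "a \<le> b" "continuous_on UNIV f"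
  shows "interval_lebesgue_integrable lborel a b f"
  by (rule interval_integrable_continuous_on) (use assms in \<open>auto intro: continuous_on_subset\<close>)

lemma indicator_times_pw:
  assumes st: "\<forall>j<n. G j < G (Suc j)" and "i \<le> k" "k \<le> n"
  shows "indicator {G i<..<G k} x * pw G n v x = (\<Sum>j\<in>{i..<k}. v j x * indicator (cell G j) x)"
proof (cases "\<exists>j<n. x \<in> cell G j")
  case True
  then obtain j where j: "j < n" "x \<in> cell G j" by blast
  have "x \<in> {G i<..<G k} \<longleftrightarrow> j \<in> {i..<k}"
  proof
    assume "j \<in> {i..<k}"
    then have "G i \<le> G j" "G (Suc j) \<le> G k" using grid_le[OF st] assms(2,3) by auto
    then show "x \<in> {G i<..<G k}" using j by auto
  next
    assume x: "x \<in> {G i<..<G k}"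
    show "j \<in> {i..<k}"
    proof (rule ccontr)
      assume "j \<notin> {i..<k}"
      then consider "Suc j \<le> i" | "k \<le> j" by auto
      then show False
      proof cases
        case 1
        then have "G (Suc j) \<le> G i" using grid_le[OF st] assms(2,3) by simp
        then show False using j(2) x by simp
      next
        case 2
        then have "G k \<le> G j" using grid_le[OF st] j(1) by simp
        then show False using j(2) x by simp
      qed
    qed
  qed
  moreover have "(\<Sum>j\<in>{i..<k}. v j x * indicator (cell G j) x) = (if j \<in> {i..<k} then v j x else 0)"
    by (rule sum_indicator_cell[OF st _ j]) (use assms(3) in auto)
  ultimately show ?thesis using pw_cell[OF st j] by simp
next
  case False
  then show ?thesis
    using sum_indicator_outside_cells[of "{i..<k}" n x G] assms(3) by (simp add: pw_outside_cells)
qed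

lemma interval_integral_pw:
  assumes st: "\<forall>j<n. G j < G (Suc j)" and ik: "i \<le> k" "k \<le> n"
    and cont: "\<forall>j<n. continuous_on UNIV (v j)"
  shows "(LBINT x=G i..G k. pw G n v x) = (\<Sum>j\<in>{i..<k}. LBINT x=G j..G (Suc j). v j x)"
proof -
  have cell_le: "G j \<le> G (Suc j)" if "j \<in> {i..<k}" for j
    using st that ik by (auto intro: less_imp_le)
  have "(LBINT x=G i..G k. pw G n v x) = (LINT x|lborel. indicator {G i<..<G k} x * pw G n v x)"
    using grid_le[OF st ik] by (simp add: interval_lebesgue_integral_le_eq set_lebesgue_integral_def)
  also have "\<dots> = (LINT x|lborel. (\<Sum>j\<in>{i..<k}. indicator (cell G j) x *\<^sub>R v j x))"
    using indicator_times_pw[OF st ik] by (simp add: mult.commute)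
  also have "\<dots> = (\<Sum>j\<in>{i..<k}. LINT x|lborel. indicator (cell G j) x *\<^sub>R v j x)"
  proof (intro Bochner_Integration.integral_sum)
    fix j assume j: "j \<in> {i..<k}"
    then have "interval_lebesgue_integrable lborel (G j) (G (Suc j)) (v j)"
      using cell_le cont ik by (intro interval_integrable_continuous_on_UNIV) auto
    then show "integrable lborel (\<lambda>x. indicator (cell G j) x *\<^sub>R v j x)"
      using cell_le[OF j] by (simp add: interval_lebesgue_integrable_def set_integrable_def)
  qed
  also have "\<dots> = (\<Sum>j\<in>{i..<k}. LBINT x=G j..G (Suc j). v j x)"
    using cell_le
    by (intro sum.cong) (simp_all add: interval_lebesgue_integral_le_eq set_lebesgue_integral_def)
  finally show ?thesis .
qed

lemma ipU_pw:
  assumes st: "\<forall>j<n. G j < G (Suc j)"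
    and cv: "\<forall>j<n. continuous_on UNIV (v j)" and cw: "\<forall>j<n. continuous_on UNIV (w j)"
  shows "ipU G n (pw G n v) (pw G n w) = (\<Sum>j<n. LBINT x=G j..G (Suc j). v j x * w j x)"
proof -
  have "ipU G n (pw G n v) (pw G n w) = (LBINT x=G 0..G n. pw G n (\<lambda>j x. v j x * w j x) x)"
    unfolding ipU_def pw_mult[OF st] ..
  also have "\<dots> = (\<Sum>j\<in>{0..<n}. LBINT x=G j..G (Suc j). v j x * w j x)"
    by (rule interval_integral_pw[OF st]) (use cv cw in \<open>auto intro: continuous_intros\<close>)
  finally show ?thesis by (simp add: atLeast0LessThan)
qed

lemma ipU_commute: "ipU G n f g = ipU G n g f"
  unfolding ipU_def by (simp add: mult.commute)

lemma PWC_lincomb: "f \<in> PWC G n \<Longrightarrow> g \<in> PWC G n \<Longrightarrow> (\<lambda>x. a * f x + b * g x) \<in> PWC G n"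
  unfolding PWC_def by (auto simp: pw_lincomb intro!: continuous_intros)

lemma PWC_sum:
  assumes "finite A" "\<forall>i\<in>A. f i \<in> PWC G n"
  shows "(\<lambda>x. \<Sum>i\<in>A. c i * f i x) \<in> PWC G n"
  using assms
proof (induction A rule: finite_induct)
  case empty
  then show ?case unfolding PWC_def using pw_zero by (auto intro!: exI[of _ "\<lambda>j x. 0"])
next
  case (insert a A)
  then have "(\<lambda>x. c a * f a x + 1 * (\<Sum>i\<in>A. c i * f i x)) \<in> PWC G n"
    by (intro PWC_lincomb) auto
  then show ?case using insert by simp
qed

lemma ipU_lincomb_left:
  assumes st: "\<forall>j<n. G j < G (Suc j)" and "f \<in> PWC G n" "g \<in> PWC G n" "h \<in> PWC G n"
  shows "ipU G n (\<lambda>x. a * f x + b * g x) h = a * ipU G n f h + b * ipU G n g h"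
proof -
  obtain v v' w where v: "f = pw G n v" "\<forall>j<n. continuous_on UNIV (v j)"
    and v': "g = pw G n v'" "\<forall>j<n. continuous_on UNIV (v' j)"
    and w: "h = pw G n w" "\<forall>j<n. continuous_on UNIV (w j)"
    using assms(2-4) by (auto simp: PWC_def)
  have cell: "(LBINT x=G j..G (Suc j). (a * v j x + b * v' j x) * w j x)
      = a * (LBINT x=G j..G (Suc j). v j x * w j x) + b * (LBINT x=G j..G (Suc j). v' j x * w j x)"
    if j: "j < n" for j
  proof -
    have "G j \<le> G (Suc j)" using st j by (simp add: less_imp_le)
    then have "interval_lebesgue_integrable lborel (G j) (G (Suc j)) (\<lambda>x. a * (v j x * w j x))"
      "interval_lebesgue_integrable lborel (G j) (G (Suc j)) (\<lambda>x. b * (v' j x * w j x))"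
      using v w v' j by (auto intro!: interval_integrable_continuous_on_UNIV continuous_intros)
    then show ?thesis by (simp add: algebra_simps interval_lebesgue_integral_add(2))
  qed
  have "ipU G n (\<lambda>x. a * f x + b * g x) h
      = (\<Sum>j<n. LBINT x=G j..G (Suc j). (a * v j x + b * v' j x) * w j x)"
    unfolding v v' w pw_lincomb
    by (rule ipU_pw[OF st]) (use v v' w in \<open>auto intro!: continuous_intros\<close>)
  also have "\<dots> = a * ipU G n f h + b * ipU G n g h"
    unfolding v v' w using cell ipU_pw[OF st v(2) w(2)] ipU_pw[OF st v'(2) w(2)]
    by (simp add: sum.distrib sum_distrib_left)
  finally show ?thesis .
qed

lemma ipU_sum_left:
  assumes st: "\<forall>j<n. G j < G (Suc j)" and "finite A" "\<forall>i\<in>A. f i \<in> PWC G n" "h \<in> PWC G n"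
  shows "ipU G n (\<lambda>x. \<Sum>i\<in>A. c i * f i x) h = (\<Sum>i\<in>A. c i * ipU G n (f i) h)"
  using assms(2,3)
proof (induction A rule: finite_induct)
  case empty
  have "(\<lambda>x. 0) \<in> PWC G n" using PWC_sum[of "{}"] by simp
  then show ?case using ipU_lincomb_left[OF st _ _ assms(4), of "\<lambda>x. 0" "\<lambda>x. 0" 0 0] by simp
next
  case (insert a A)
  then show ?case
    using ipU_lincomb_left[OF st _ PWC_sum assms(4), of "f a" A f "c a" 1 c] by simp
qed

text \<open>ipU f f is a sum of integrals of squares of continuous functions over nondegenerate cells.\<close>

lemma PWC_ipU_self_eq_0:
  assumes st: "\<forall>j<n. G j < G (Suc j)" and "f \<in> PWC G n" and "ipU G n f f = 0"
  shows "f = (\<lambda>x. 0)"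
proof -
  obtain v where v: "f = pw G n v" "\<forall>j<n. continuous_on UNIV (v j)"
    using assms(2) by (auto simp: PWC_def)
  have cont: "continuous_on {G j..G (Suc j)} (\<lambda>x. v j x * v j x)" if "j < n" for j
    using v(2) that by (auto intro!: continuous_intros intro: continuous_on_subset)
  have eq: "(LBINT x=G j..G (Suc j). v j x * v j x) = integral {G j..G (Suc j)} (\<lambda>x. v j x * v j x)"
    if "j < n" for j
    using st that cont[OF that]
    by (intro interval_integral_eq_integral borel_integrable_atLeastAtMost') (auto intro: less_imp_le)
  have "(\<Sum>j<n. LBINT x=G j..G (Suc j). v j x * v j x) = 0"
    using assms(3) ipU_pw[OF st v(2) v(2)] v(1) by simp
  moreover have "0 \<le> (LBINT x=G j..G (Suc j). v j x * v j x)" if "j < n" for j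
    unfolding eq[OF that] using cont[OF that] by (intro integral_nonneg integrable_continuous_interval) auto
  ultimately have "\<forall>j\<in>{..<n}. (LBINT x=G j..G (Suc j). v j x * v j x) = 0"
    by (subst sum_nonneg_eq_0_iff[symmetric]) auto
  then have "integral {G j..G (Suc j)} (\<lambda>x. v j x * v j x) = 0" if "j < n" for j
    using eq[OF that] that by simp
  then have zero: "v j x = 0" if "j < n" "x \<in> cell G j" for j x
    using integral_eq_0_iff[OF cont[OF that(1)], of] st that by auto
  show ?thesis
  proof
    fix x
    show "f x = 0"
    proof (cases "\<exists>j<n. x \<in> cell G j")
      case True
      then show ?thesis using pw_cell[OF st] zero v(1) by auto
    qed (simp add: v(1) pw_outside_cells)
  qed
qed

section \<open>Finite spans and the Riesz representation\<close>

lemma Vspan_empty: "Vspan {} = {\<lambda>x. 0}"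
  by (auto simp: Vspan_def)

lemma Vspan_zero: "(\<lambda>x. 0) \<in> Vspan B"
  unfolding Vspan_def by (auto intro!: exI[of _ "\<lambda>_. 0"])

lemma Vspan_lincomb:
  assumes "f \<in> Vspan B" "g \<in> Vspan B"
  shows "(\<lambda>x. a * f x + b * g x) \<in> Vspan B"
proof -
  obtain c c' where "f = (\<lambda>x. \<Sum>h\<in>B. c h * h x)" "g = (\<lambda>x. \<Sum>h\<in>B. c' h * h x)"
    using assms by (auto simp: Vspan_def)
  then have "(\<lambda>x. a * f x + b * g x) = (\<lambda>x. \<Sum>h\<in>B. (a * c h + b * c' h) * h x)"
    by (simp add: sum_distrib_left sum.distrib algebra_simps)
  then show ?thesis unfolding Vspan_def mem_Collect_eq by (rule exI[of _ "\<lambda>h. a * c h + b * c' h"])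
qed

lemma Vspan_sum:
  assumes "finite A" "\<forall>i\<in>A. f i \<in> Vspan B"
  shows "(\<lambda>x. \<Sum>i\<in>A. f i x) \<in> Vspan B"
  using assms
proof (induction A rule: finite_induct)
  case (insert a A)
  then have "(\<lambda>x. 1 * f a x + 1 * (\<Sum>i\<in>A. f i x)) \<in> Vspan B"
    by (intro Vspan_lincomb) auto
  then show ?case using insert by simp
qed (simp add: Vspan_zero)

lemma Vspan_superset:
  assumes "b \<in> B" "finite B"
  shows "b \<in> Vspan B"
proof -
  have "(\<Sum>h\<in>B. of_bool (h = b) * h x) = (\<Sum>h\<in>B. if h = b then b x else 0)" for x
    by (rule sum.cong) auto
  then have "b = (\<lambda>x. \<Sum>h\<in>B. of_bool (h = b) * h x)"
    using assms by simp
  then show ?thesis unfolding Vspan_def mem_Collect_eq by (rule exI[of _ "\<lambda>h. of_bool (h = b)"])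
qed

lemma Vspan_insert:
  assumes "finite B" "b \<notin> B"
  shows "w \<in> Vspan (insert b B) \<longleftrightarrow> (\<exists>s w0. w0 \<in> Vspan B \<and> w = (\<lambda>x. s * b x + w0 x))"
proof
  assume "w \<in> Vspan (insert b B)"
  then obtain c where "w = (\<lambda>x. \<Sum>h\<in>insert b B. c h * h x)" by (auto simp: Vspan_def)
  then have "w = (\<lambda>x. c b * b x + (\<Sum>h\<in>B. c h * h x))" using assms by simp
  moreover have "(\<lambda>x. \<Sum>h\<in>B. c h * h x) \<in> Vspan B" by (auto simp: Vspan_def)
  ultimately show "\<exists>s w0. w0 \<in> Vspan B \<and> w = (\<lambda>x. s * b x + w0 x)" by blast
next
  assume "\<exists>s w0. w0 \<in> Vspan B \<and> w = (\<lambda>x. s * b x + w0 x)"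
  then obtain s c where w: "w = (\<lambda>x. s * b x + (\<Sum>h\<in>B. c h * h x))" by (auto simp: Vspan_def)
  have "(\<Sum>h\<in>B. c h * h x) = (\<Sum>h\<in>B. (c(b := s)) h * h x)" for x
    using assms by (intro sum.cong) auto
  then have "w = (\<lambda>x. \<Sum>h\<in>insert b B. (c(b := s)) h * h x)" using assms w by simp
  then show "w \<in> Vspan (insert b B)" unfolding Vspan_def by blast
qed

lemma Vspan_subset_Vspan_insert:
  assumes "finite B" "b \<notin> B"
  shows "Vspan B \<subseteq> Vspan (insert b B)"
proof
  fix w assume "w \<in> Vspan B"
  then show "w \<in> Vspan (insert b B)"
    using assms by (subst Vspan_insert) (auto intro!: exI[of _ 0] exI[of _ w])
qed

text \<open>After the Gram--Schmidt step b \<mapsto> b - p, with p \<in> Vspan B, the span of insert b B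
  is still swept out by multiples of the new vector plus elements of Vspan B.\<close>

lemma Vspan_insert_shifted:
  assumes "finite B" "b \<notin> B" "p \<in> Vspan B" "w \<in> Vspan (insert b B)"
  shows "\<exists>s w1. w1 \<in> Vspan B \<and> w = (\<lambda>x. s * (b x - p x) + w1 x)"
proof -
  obtain s w0 where w0: "w0 \<in> Vspan B" "w = (\<lambda>x. s * b x + w0 x)"
    using assms(4) Vspan_insert[OF assms(1,2)] by blast
  have "(\<lambda>x. s * p x + 1 * w0 x) \<in> Vspan B" by (rule Vspan_lincomb[OF assms(3) w0(1)])
  moreover have "w = (\<lambda>x. s * (b x - p x) + (s * p x + 1 * w0 x))"
    using w0(2) by (simp add: algebra_simps)
  ultimately show ?thesis by blast
qed

definition linear_functional_on :: "(real \<Rightarrow> real) set \<Rightarrow> ((real \<Rightarrow> real) \<Rightarrow> real) \<Rightarrow> bool" where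
  "linear_functional_on U \<phi> \<longleftrightarrow>
     (\<forall>f\<in>U. \<forall>g\<in>U. \<forall>a b. \<phi> (\<lambda>x. a * f x + b * g x) = a * \<phi> f + b * \<phi> g)"

lemma linear_functional_on_subset:
  "linear_functional_on U \<phi> \<Longrightarrow> V \<subseteq> U \<Longrightarrow> linear_functional_on V \<phi>"
  unfolding linear_functional_on_def by blast

locale fun_inner_space =
  fixes U :: "(real \<Rightarrow> real) set" and ip :: "(real \<Rightarrow> real) \<Rightarrow> (real \<Rightarrow> real) \<Rightarrow> real"
  assumes zero_mem: "(\<lambda>x. 0) \<in> U"
    and lincomb_mem: "f \<in> U \<Longrightarrow> g \<in> U \<Longrightarrow> (\<lambda>x. a * f x + b * g x) \<in> U"
    and ip_lincomb_left: "f \<in> U \<Longrightarrow> g \<in> U \<Longrightarrow> h \<in> U \<Longrightarrow>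
      ip (\<lambda>x. a * f x + b * g x) h = a * ip f h + b * ip g h"
    and ip_commute: "ip f g = ip g f"
    and ip_self_eq_0: "f \<in> U \<Longrightarrow> ip f f = 0 \<Longrightarrow> f = (\<lambda>x. 0)"
begin

lemma ip_lincomb_right:
  assumes "f \<in> U" "g \<in> U" "h \<in> U"
  shows "ip h (\<lambda>x. a * f x + b * g x) = a * ip h f + b * ip h g"
  using ip_lincomb_left[OF assms, of a b] by (simp only: ip_commute[of h])

lemma ip_diff_right: "f \<in> U \<Longrightarrow> g \<in> U \<Longrightarrow> h \<in> U \<Longrightarrow> ip h (\<lambda>x. f x - g x) = ip h f - ip h g"
  using ip_lincomb_right[of f g h 1 "-1"] by simp

lemma ip_diff_left: "f \<in> U \<Longrightarrow> g \<in> U \<Longrightarrow> h \<in> U \<Longrightarrow> ip (\<lambda>x. f x - g x) h = ip f h - ip g h"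
  using ip_lincomb_left[of f g h 1 "-1"] by simp

lemma diff_mem: "f \<in> U \<Longrightarrow> g \<in> U \<Longrightarrow> (\<lambda>x. f x - g x) \<in> U"
  using lincomb_mem[of f g 1 "-1"] by simp

lemma Vspan_subset: "finite B \<Longrightarrow> B \<subseteq> U \<Longrightarrow> Vspan B \<subseteq> U"
proof (induction B rule: finite_induct)
  case (insert b B)
  show ?case
  proof
    fix w assume "w \<in> Vspan (insert b B)"
    then obtain s w0 where "w0 \<in> Vspan B" "w = (\<lambda>x. s * b x + 1 * w0 x)"
      using Vspan_insert[OF insert(1,2)] by auto
    then show "w \<in> U" using insert lincomb_mem[of b w0 s 1] by auto
  qed
qed (simp add: Vspan_empty zero_mem)

lemma representer_unique:
  assumes "d \<in> U" "d' \<in> U" "\<forall>w\<in>U. ip w d = ip w d'"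
  shows "d = d'"
proof -
  have "ip (\<lambda>x. d x - d' x) (\<lambda>x. d x - d' x) = 0"
    using assms(3)[rule_format, OF assms(1)] assms(3)[rule_format, OF assms(2)]
    by (simp add: ip_diff_left ip_diff_right diff_mem assms(1,2))
  then have "(\<lambda>x. d x - d' x) = (\<lambda>x. 0)" by (intro ip_self_eq_0 diff_mem assms(1,2))
  then show ?thesis by (simp add: fun_eq_iff)
qed

text \<open>The inductive step of the Riesz representation: a representer d0 on W extends to
  W plus a direction e orthogonal to W by adding the right multiple of e.\<close>

lemma representer_add_orthogonal:
  assumes "W \<subseteq> U" "W \<subseteq> V" "e \<in> U" "e \<in> V" "ip e e \<noteq> 0" "\<forall>w\<in>W. ip w e = 0"
    and "linear_functional_on V \<phi>" "d0 \<in> W" "\<forall>w\<in>W. ip w d0 = \<phi> w" "w1 \<in> W"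
  shows "ip (\<lambda>x. s * e x + 1 * w1 x) (\<lambda>x. 1 * d0 x + \<phi> e / ip e e * e x) = \<phi> (\<lambda>x. s * e x + 1 * w1 x)"
    (is "ip ?w _ = _")
proof -
  define t where "t = \<phi> e / ip e e"
  have U: "w1 \<in> U" "d0 \<in> U" "?w \<in> U"
    using assms(1,8,10) lincomb_mem[OF assms(3), of w1 s 1] by auto
  have "ip ?w (\<lambda>x. 1 * d0 x + t * e x) = 1 * ip ?w d0 + t * ip ?w e"
    by (rule ip_lincomb_right[OF U(2) assms(3) U(3)])
  also have "ip ?w d0 = s * ip e d0 + 1 * ip w1 d0"
    by (rule ip_lincomb_left[OF assms(3) U(1,2)])
  also have "ip ?w e = s * ip e e + 1 * ip w1 e"
    by (rule ip_lincomb_left[OF assms(3) U(1) assms(3)])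
  also have "1 * (s * ip e d0 + 1 * ip w1 d0) + t * (s * ip e e + 1 * ip w1 e) = s * \<phi> e + \<phi> w1"
    using assms(5,6,8,9,10) ip_commute[of e d0] by (simp add: t_def)
  also have "\<dots> = \<phi> ?w"
    using assms(7)[unfolded linear_functional_on_def, rule_format, OF assms(4), of w1 s 1] assms(2,10)
    by auto
  finally show ?thesis unfolding t_def .
qed

lemma riesz_Vspan:
  assumes "finite B" "B \<subseteq> U" "linear_functional_on (Vspan B) \<phi>"
  shows "\<exists>d\<in>Vspan B. \<forall>w\<in>Vspan B. ip w d = \<phi> w"
  using assms
proof (induction B arbitrary: \<phi> rule: finite_induct)
  case empty
  have "\<phi> (\<lambda>x. 0) = 0"
    using empty(2)[unfolded linear_functional_on_def, rule_format, OF Vspan_zero Vspan_zero, of 0 0]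
    by simp
  moreover have "ip (\<lambda>x. 0) (\<lambda>x. 0) = 0"
    using ip_lincomb_left[OF zero_mem zero_mem zero_mem, of 0 0] by simp
  ultimately show ?case by (simp add: Vspan_empty)
next
  case (insert b B)
  let ?V = "Vspan (insert b B)"
  have sub: "Vspan B \<subseteq> ?V" by (rule Vspan_subset_Vspan_insert[OF insert(1,2)])
  have VU: "Vspan B \<subseteq> U" "?V \<subseteq> U" "b \<in> U"
    using Vspan_subset insert(1,4) by auto
  have "linear_functional_on (Vspan B) (\<lambda>w. ip w b)"
    unfolding linear_functional_on_def using VU by (auto intro: ip_lincomb_left)
  then obtain p where p: "p \<in> Vspan B" "\<forall>w\<in>Vspan B. ip w p = ip w b"
    using insert(3,4) by blast
  obtain d0 where d0: "d0 \<in> Vspan B" "\<forall>w\<in>Vspan B. ip w d0 = \<phi> w"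
    using insert(3,4) linear_functional_on_subset[OF insert(5) sub] by blast
  define e where "e = (\<lambda>x. b x - p x)"
  have e: "e \<in> ?V" "e \<in> U"
    unfolding e_def using Vspan_lincomb[of b _ p 1 "-1"] Vspan_superset[of b "insert b B"] p(1) sub
      insert(1) VU by auto
  have e_orth: "\<forall>w\<in>Vspan B. ip w e = 0"
  proof
    fix w assume "w \<in> Vspan B"
    then show "ip w e = 0" using p VU ip_diff_right[of b p w] unfolding e_def by auto
  qed
  have decomp: "\<exists>s w1. w1 \<in> Vspan B \<and> w = (\<lambda>x. s * e x + 1 * w1 x)" if "w \<in> ?V" for w
    using Vspan_insert_shifted[OF insert(1,2) p(1) that] unfolding e_def by auto
  show ?case
  proof (cases "ip e e = 0")
    case True
    then have "?V \<subseteq> Vspan B" using decomp ip_self_eq_0[OF e(2)] by fastforce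
    then show ?thesis using d0 sub by blast
  next
    case False
    have "(\<lambda>x. 1 * d0 x + \<phi> e / ip e e * e x) \<in> ?V"
      using d0(1) sub e(1) by (intro Vspan_lincomb) auto
    moreover have "\<forall>w\<in>?V. ip w (\<lambda>x. 1 * d0 x + \<phi> e / ip e e * e x) = \<phi> w"
      using decomp representer_add_orthogonal[OF VU(1) sub e(2,1) False e_orth insert(5) d0] by blast
    ultimately show ?thesis by blast
  qed
qed

lemma ex1_representer:
  assumes "finite B" "B \<subseteq> U" "U = Vspan B" "linear_functional_on U \<phi>"
  shows "\<exists>!d. d \<in> U \<and> (\<forall>w\<in>U. ip w d = \<phi> w)"
  using riesz_Vspan[OF assms(1,2)] representer_unique assms(3,4) by metis

end

section \<open>The space U(R) at one level\<close>

lemma VC1_lincomb: "f \<in> VC1 l \<Longrightarrow> g \<in> VC1 l \<Longrightarrow> (\<lambda>x. a * f x + b * g x) \<in> VC1 l"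
  unfolding VC1_def by (auto intro!: Vspan_lincomb derivative_intros)

lemma VC1_zero: "(\<lambda>x. 0) \<in> VC1 l"
  unfolding VC1_def using Vspan_zero by auto

lemma VC1_const:
  assumes "finite l" "(\<lambda>x. 1) \<in> l"
  shows "(\<lambda>x. c) \<in> VC1 l"
  using Vspan_lincomb[OF Vspan_superset[OF assms(2,1)] Vspan_zero, of c 0]
  by (simp add: VC1_def)

lemma VC1_isCont: "f \<in> VC1 l \<Longrightarrow> isCont f x"
  unfolding VC1_def
  using C1_differentiable_imp_continuous_on continuous_on_eq_continuous_at[of UNIV f] by blast

lemma VC1_deriv:
  assumes "f \<in> VC1 l"
  shows "continuous_on UNIV (deriv f)" "(f has_real_derivative deriv f x) (at x)"
proof -
  have "(\<forall>x. f differentiable at x) \<and> continuous_on UNIV (\<lambda>x. vector_derivative f (at x))"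
    using assms C1_differentiable_on_eq[of f UNIV] unfolding VC1_def by blast
  then have deriv: "(f has_real_derivative deriv f y) (at y)"
    and cont: "continuous_on UNIV (\<lambda>y. vector_derivative f (at y))" for y
    using DERIV_deriv_iff_real_differentiable by blast+
  show "(f has_real_derivative deriv f x) (at x)" by (rule deriv)
  have "vector_derivative f (at y) = deriv f y" for y
    using deriv[of y] by (intro vector_derivative_at) (simp add: has_real_derivative_iff_has_vector_derivative)
  then show "continuous_on UNIV (deriv f)" using cont by (simp add: fun_eq_iff)
qed

lemma VC1_FTC:
  assumes "f \<in> VC1 l" "a \<le> b"
  shows "(LBINT x=a..b. deriv f x) = f b - f a"
  using VC1_deriv[OF assms(1)]
  by (intro interval_integral_FTC_finite)
    (auto intro: continuous_on_subset has_vector_derivative_at_within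
      simp: has_real_derivative_iff_has_vector_derivative)

lemma UR_lincomb:
  assumes "f \<in> UR l G n" "g \<in> UR l G n"
  shows "(\<lambda>x. a * f x + b * g x) \<in> UR l G n"
proof -
  obtain v w where "f = pw G n v" "\<forall>j<n. v j \<in> VC1 l" "g = pw G n w" "\<forall>j<n. w j \<in> VC1 l"
    using assms by (auto simp: UR_def)
  then show ?thesis unfolding UR_def by (auto simp: pw_lincomb intro!: VC1_lincomb)
qed

lemma UR_zero: "(\<lambda>x. 0) \<in> UR l G n"
  unfolding UR_def using pw_zero[symmetric] VC1_zero by blast

lemma UR_sum:
  assumes "finite A" "\<forall>i\<in>A. f i \<in> UR l G n"
  shows "(\<lambda>x. \<Sum>i\<in>A. c i * f i x) \<in> UR l G n"
  using assms
proof (induction A rule: finite_induct)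
  case (insert a A)
  then have "(\<lambda>x. c a * f a x + 1 * (\<Sum>i\<in>A. c i * f i x)) \<in> UR l G n"
    by (intro UR_lincomb) auto
  then show ?case using insert by simp
qed (simp add: UR_zero)

lemma UR_imp_PWC: "f \<in> UR l G n \<Longrightarrow> f \<in> PWC G n"
  unfolding UR_def PWC_def VC1_def using C1_differentiable_imp_continuous_on by blast

lemma fun_inner_space_UR:
  assumes "\<forall>j<n. G j < G (Suc j)"
  shows "fun_inner_space (UR l G n) (ipU G n)"
proof
  fix f g h and a b :: real
  assume "f \<in> UR l G n" "g \<in> UR l G n" "h \<in> UR l G n"
  then show "ipU G n (\<lambda>x. a * f x + b * g x) h = a * ipU G n f h + b * ipU G n g h"
    by (intro ipU_lincomb_left[OF assms] UR_imp_PWC)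
next
  fix f assume "f \<in> UR l G n" "ipU G n f f = 0"
  then show "f = (\<lambda>x. 0)"
    by (intro PWC_ipU_self_eq_0[OF assms] UR_imp_PWC)
qed (auto simp: UR_zero UR_lincomb ipU_commute)

lemma sum_fun_apply: "(\<Sum>a\<in>A. f a) x = (\<Sum>a\<in>A. f a x :: real)"
  for f :: "'b \<Rightarrow> real \<Rightarrow> real"
  by (induction A rule: infinite_finite_induct) (auto simp: plus_fun_def zero_fun_def)

interpretation FV: vector_space "\<lambda>(c::real) (f::real \<Rightarrow> real) (x::real). c * f x"
  by unfold_locales (auto simp: fun_eq_iff algebra_simps plus_fun_def)

lemma FV_span_eq_Vspan: "finite S \<Longrightarrow> FV.span S = Vspan S"
  by (auto simp: FV.span_finite Vspan_def sum_fun_apply fun_eq_iff)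

lemma FV_subspace_UR: "FV.subspace (UR l G n)"
  unfolding FV.subspace_def
proof (intro conjI ballI allI)
  show "0 \<in> UR l G n" using UR_zero by (simp add: zero_fun_def)
next
  fix f g assume "f \<in> UR l G n" "g \<in> UR l G n"
  then show "f + g \<in> UR l G n" using UR_lincomb[of f l G n g 1 1] by (simp add: plus_fun_def)
next
  fix c :: real and f assume "f \<in> UR l G n"
  then show "(\<lambda>x. c * f x) \<in> UR l G n" using UR_lincomb[of f l G n f c 0] by simp
qed

lemma UR_subset_Vspan_cells:
  assumes "finite l"
  shows "UR l G n \<subseteq> Vspan ((\<lambda>(j, g) x. g x * indicator (cell G j) x) ` ({..<n} \<times> l))"
    (is "_ \<subseteq> Vspan ?F")
proof
  fix u assume "u \<in> UR l G n"
  then obtain v where v: "u = pw G n v" "\<forall>j<n. v j \<in> VC1 l" by (auto simp: UR_def)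
  then have "\<forall>j. \<exists>c. j < n \<longrightarrow> v j = (\<lambda>x. \<Sum>g\<in>l. c g * g x)"
    by (auto simp: VC1_def Vspan_def)
  then obtain c where c: "\<forall>j<n. v j = (\<lambda>x. \<Sum>g\<in>l. c j g * g x)" by metis
  have "u = (\<lambda>x. \<Sum>j<n. \<Sum>g\<in>l. c j g * (g x * indicator (cell G j) x))"
    using c unfolding v pw_def by (auto simp: fun_eq_iff sum_distrib_right mult.assoc)
  also have "\<dots> \<in> Vspan ?F"
  proof (intro Vspan_sum ballI)
    fix j g assume "j \<in> {..<n}" "g \<in> l"
    then have "(\<lambda>x. g x * indicator (cell G j) x) \<in> Vspan ?F"
      using assms by (intro Vspan_superset) auto
    then show "(\<lambda>x. c j g * (g x * indicator (cell G j) x)) \<in> Vspan ?F"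
      using Vspan_lincomb[OF _ Vspan_zero, of _ ?F "c j g" 0] by simp
  qed (use assms in auto)
  finally show "u \<in> Vspan ?F" .
qed

text \<open>The functions in the level l need not be C1, so a spanning set of U(R) lying inside U(R)
  has to be extracted by the dimension theory of the vector space of all real functions.\<close>

lemma UR_eq_Vspan_finite:
  assumes "finite l"
  shows "\<exists>B. finite B \<and> B \<subseteq> UR l G n \<and> UR l G n = Vspan B"
proof -
  define F where "F = (\<lambda>(j, g) x. g x * indicator (cell G j) x) ` ({..<n} \<times> l)"
  have F: "finite F" "UR l G n \<subseteq> FV.span F"
    unfolding F_def using assms UR_subset_Vspan_cells FV_span_eq_Vspan by auto
  obtain B where B: "B \<subseteq> UR l G n" "FV.independent B" "UR l G n \<subseteq> FV.span B"
    using FV.maximal_independent_subset[of "UR l G n"] by blast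
  have "finite B"
    using FV.independent_span_bound[OF F(1) B(2)] B(1) F(2) by auto
  moreover have "FV.span B \<subseteq> UR l G n" by (rule FV.span_minimal[OF B(1) FV_subspace_UR])
  ultimately show ?thesis using B FV_span_eq_Vspan by (intro exI[of _ B]) auto
qed

lemma UR_ex1_representer:
  assumes "finite l" "\<forall>j<n. G j < G (Suc j)" "linear_functional_on (UR l G n) \<phi>"
  shows "\<exists>!d. d \<in> UR l G n \<and> (\<forall>w\<in>UR l G n. ipU G n w d = \<phi> w)"
proof -
  interpret fun_inner_space "UR l G n" "ipU G n" by (rule fun_inner_space_UR[OF assms(2)])
  obtain B where "finite B" "B \<subseteq> UR l G n" "UR l G n = Vspan B"
    using UR_eq_Vspan_finite[OF assms(1)] by blast
  then show ?thesis by (rule ex1_representer[OF _ _ _ assms(3)])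
qed

lemma projU_spec:
  assumes "finite l" and st: "\<forall>j<n. G j < G (Suc j)" and f: "f \<in> PWC G n"
  shows "projU l G n f \<in> UR l G n" "\<forall>w\<in>UR l G n. ipU G n (projU l G n f) w = ipU G n f w"
proof -
  let ?P = "\<lambda>p. p \<in> UR l G n \<and> (\<forall>w\<in>UR l G n. ipU G n (\<lambda>x. f x - p x) w = 0)"
  have orth_iff: "ipU G n (\<lambda>x. f x - p x) w = 0 \<longleftrightarrow> ipU G n w p = ipU G n f w"
    if "p \<in> UR l G n" "w \<in> UR l G n" for p w
  proof -
    have "p \<in> PWC G n" "w \<in> PWC G n" using that by (auto intro: UR_imp_PWC)
    then have "ipU G n (\<lambda>x. f x - p x) w = ipU G n f w - ipU G n w p"
      using ipU_lincomb_left[OF st f, of p w 1 "-1"] ipU_commute[of G n p w] by simp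
    then show ?thesis by linarith
  qed
  have "linear_functional_on (UR l G n) (ipU G n f)"
    unfolding linear_functional_on_def
  proof (intro ballI allI)
    fix g h a b assume "g \<in> UR l G n" "h \<in> UR l G n"
    then show "ipU G n f (\<lambda>x. a * g x + b * h x) = a * ipU G n f g + b * ipU G n f h"
      using ipU_lincomb_left[OF st UR_imp_PWC UR_imp_PWC f, of g l h l a b]
      by (auto simp: ipU_commute[of G n _ f])
  qed
  then have "\<exists>!p. p \<in> UR l G n \<and> (\<forall>w\<in>UR l G n. ipU G n w p = ipU G n f w)"
    by (rule UR_ex1_representer[OF assms(1,2)])
  moreover have "?P p \<longleftrightarrow> p \<in> UR l G n \<and> (\<forall>w\<in>UR l G n. ipU G n w p = ipU G n f w)" for p
    using orth_iff by blast
  ultimately have "\<exists>!p. ?P p" by (simp only:)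
  then have "?P (projU l G n f)" unfolding projU_def by (rule theI')
  then show "projU l G n f \<in> UR l G n" "\<forall>w\<in>UR l G n. ipU G n (projU l G n f) w = ipU G n f w"
    using orth_iff ipU_commute by auto
qed

lemma deltaU_spec:
  assumes "finite l" and st: "\<forall>j<n. G j < G (Suc j)" and "m < n"
  shows "deltaU l G n (G m) \<in> UR l G n"
    "\<forall>w\<in>UR l G n. ipU G n w (deltaU l G n (G m)) = gval G n w (G m)"
proof -
  have gval: "gval G n (pw G n v) (G m) = (v (min m (n - 1)) (G m) + v (m - 1) (G m)) / 2"
    if "\<forall>j<n. v j \<in> VC1 l" for v
    using that \<open>m < n\<close> VC1_isCont by (intro gval_pw[OF st]) auto
  have "linear_functional_on (UR l G n) (\<lambda>w. gval G n w (G m))"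
    unfolding linear_functional_on_def
  proof (intro ballI allI)
    fix f g a b assume "f \<in> UR l G n" "g \<in> UR l G n"
    then obtain v w where v: "f = pw G n v" "\<forall>j<n. v j \<in> VC1 l"
      and w: "g = pw G n w" "\<forall>j<n. w j \<in> VC1 l"
      by (auto simp: UR_def)
    have vw: "\<forall>j<n. (\<lambda>x. a * v j x + b * w j x) \<in> VC1 l" using v(2) w(2) VC1_lincomb by blast
    show "gval G n (\<lambda>x. a * f x + b * g x) (G m) = a * gval G n f (G m) + b * gval G n g (G m)"
      unfolding v(1) w(1) pw_lincomb gval[OF v(2)] gval[OF w(2)] gval[OF vw] by (simp add: field_simps)
  qed
  then have "\<exists>!d. d \<in> UR l G n \<and> (\<forall>w\<in>UR l G n. ipU G n w d = gval G n w (G m))"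
    by (rule UR_ex1_representer[OF assms(1,2)])
  from theI'[OF this] show "deltaU l G n (G m) \<in> UR l G n"
    "\<forall>w\<in>UR l G n. ipU G n w (deltaU l G n (G m)) = gval G n w (G m)"
    unfolding deltaU_def by blast+
qed

section \<open>The fundamental theorem of calculus at one level\<close>

definition grid_indicator :: "(nat \<Rightarrow> real) \<Rightarrow> nat \<Rightarrow> nat \<Rightarrow> nat \<Rightarrow> real \<Rightarrow> real" where
  "grid_indicator G n i k = pw G n (\<lambda>j x. of_bool (i \<le> j \<and> j < k))"

lemma grid_indicator_UR:
  assumes "finite l" "(\<lambda>x. 1) \<in> l"
  shows "grid_indicator G n i k \<in> UR l G n"
  unfolding grid_indicator_def UR_def using VC1_const[OF assms] by blast

lemma interval_integral_eq_ipU_grid_indicator: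
  assumes st: "\<forall>j<n. G j < G (Suc j)" and f: "f \<in> PWC G n" and "i \<le> k" "k \<le> n"
  shows "(LBINT x=G i..G k. f x) = ipU G n f (grid_indicator G n i k)"
proof -
  obtain v where v: "f = pw G n v" "\<forall>j<n. continuous_on UNIV (v j)"
    using f by (auto simp: PWC_def)
  have "(LBINT x=G i..G k. f x) = (\<Sum>j\<in>{i..<k}. LBINT x=G j..G (Suc j). v j x)"
    unfolding v by (rule interval_integral_pw[OF st assms(3,4) v(2)])
  also have "\<dots> = (\<Sum>j<n. LBINT x=G j..G (Suc j). v j x * of_bool (i \<le> j \<and> j < k))"
    using assms(4) by (intro sum.mono_neutral_cong_left) auto
  also have "\<dots> = ipU G n f (grid_indicator G n i k)"
    unfolding v grid_indicator_def by (rule ipU_pw[OF st v(2), symmetric]) simp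
  finally show ?thesis .
qed

lemma gval_grid_indicator:
  assumes st: "\<forall>j<n. G j < G (Suc j)" and "0 < m" "m < n"
  shows "gval G n (grid_indicator G n i k) (G m)
    = (of_bool (i \<le> m \<and> m < k) + of_bool (i < m \<and> m \<le> k)) / 2"
  unfolding grid_indicator_def using gval_pw[OF st, of m] assms(2,3) by (auto simp: min_def)

lemma interval_integral_pder_pw:
  assumes st: "\<forall>j<n. G j < G (Suc j)" and "\<forall>j<n. v j \<in> VC1 l" and "i \<le> k" "k \<le> n"
  shows "(LBINT x=G i..G k. pder G n (pw G n v) x) = (\<Sum>j\<in>{i..<k}. v j (G (Suc j)) - v j (G j))"
proof -
  have "(LBINT x=G i..G k. pder G n (pw G n v) x) = (\<Sum>j\<in>{i..<k}. LBINT x=G j..G (Suc j). deriv (v j) x)"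
    unfolding pder_pw[OF st] using assms VC1_deriv(1) by (intro interval_integral_pw[OF st]) auto
  also have "\<dots> = (\<Sum>j\<in>{i..<k}. v j (G (Suc j)) - v j (G j))"
    using assms(2,4) st by (intro sum.cong refl VC1_FTC[of _ l]) (auto intro: less_imp_le)
  finally show ?thesis .
qed

text \<open>Here right k and left k are the values at G k of the pieces to the right and to the left,
  which agree at the end points 0 and n. Half of each jump completes the increments of the
  pieces on either side, which then telescope.\<close>

lemma increments_plus_jumps_telescope:
  fixes right left :: "nat \<Rightarrow> real"
  assumes "i \<le> k" "k \<le> n" "right 0 = left 0" "right n = left n"
  shows "(\<Sum>j\<in>{i..<k}. left (Suc j) - right j)
      + (\<Sum>m\<in>{1..<n}. (right m - left m) * ((of_bool (i \<le> m \<and> m < k) + of_bool (i < m \<and> m \<le> k)) / 2))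
    = (right k + left k) / 2 - (right i + left i) / 2"
proof -
  define J where "J m = (right m - left m) / 2" for m
  have "(\<Sum>m\<in>{1..<n}. (right m - left m) * ((of_bool (i \<le> m \<and> m < k) + of_bool (i < m \<and> m \<le> k)) / 2))
      = (\<Sum>m\<in>{1..<n}. J m * of_bool (i \<le> m \<and> m < k) + J m * of_bool (i < m \<and> m \<le> k))"
    by (intro sum.cong) (simp_all add: J_def field_simps)
  also have "\<dots> = (\<Sum>m\<in>{..n}. J m * of_bool (i \<le> m \<and> m < k) + J m * of_bool (i < m \<and> m \<le> k))"
  proof (rule sum.mono_neutral_left)
    show "\<forall>m\<in>{..n} - {1..<n}. J m * of_bool (i \<le> m \<and> m < k) + J m * of_bool (i < m \<and> m \<le> k) = 0"
    proof
      fix m assume "m \<in> {..n} - {1..<n}"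
      then have "m = 0 \<or> m = n" by auto
      then show "J m * of_bool (i \<le> m \<and> m < k) + J m * of_bool (i < m \<and> m \<le> k) = 0"
        using assms(3,4) by (auto simp: J_def)
    qed
  qed auto
  also have "\<dots> = (\<Sum>m\<in>{i..<k}. J m) + (\<Sum>m\<in>{Suc i..<Suc k}. J m)"
  proof -
    have "{..n} \<inter> {m. i \<le> m \<and> m < k} = {i..<k}" "{..n} \<inter> {m. i < m \<and> m \<le> k} = {Suc i..<Suc k}"
      using assms(2) by auto
    then show ?thesis by (simp add: sum.distrib)
  qed
  also have "\<dots> = (\<Sum>j\<in>{i..<k}. J j + J (Suc j))"
    by (simp only: sum.shift_bounds_Suc_ivl sum.distrib)
  finally have jumps: "(\<Sum>m\<in>{1..<n}. (right m - left m) * ((of_bool (i \<le> m \<and> m < k) + of_bool (i < m \<and> m \<le> k)) / 2))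
      = (\<Sum>j\<in>{i..<k}. J j + J (Suc j))" .
  have "(\<Sum>j\<in>{i..<k}. left (Suc j) - right j) + (\<Sum>j\<in>{i..<k}. J j + J (Suc j))
      = (\<Sum>j\<in>{i..<k}. (right (Suc j) + left (Suc j)) / 2 - (right j + left j) / 2)"
    unfolding sum.distrib[symmetric] J_def by (intro sum.cong) (simp_all add: field_simps)
  also have "\<dots> = (right k + left k) / 2 - (right i + left i) / 2"
    by (rule sum_Suc_diff'[OF assms(1)])
  finally show ?thesis unfolding jumps .
qed

lemma pder_PWC:
  assumes "\<forall>j<n. G j < G (Suc j)" "u \<in> UR l G n"
  shows "pder G n u \<in> PWC G n"
proof -
  obtain v where v: "u = pw G n v" "\<forall>j<n. v j \<in> VC1 l" using assms(2) by (auto simp: UR_def)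
  then show ?thesis unfolding v(1) pder_pw[OF assms(1)] PWC_def using VC1_deriv(1) by blast
qed

lemma DU_eq_lincomb:
  "DU l G n u = (\<lambda>x. 1 * projU l G n (pder G n u) x
     + 1 * (\<Sum>m\<in>{1..<n}. jumpU G u m * deltaU l G n (G m) x))"
  by (simp add: DU_def fun_eq_iff)

lemma DU_UR:
  assumes "finite l" "\<forall>j<n. G j < G (Suc j)" "u \<in> UR l G n"
  shows "DU l G n u \<in> UR l G n"
  unfolding DU_eq_lincomb
  using projU_spec(1)[OF assms(1,2) pder_PWC[OF assms(2,3)]] deltaU_spec(1)[OF assms(1,2)]
  by (intro UR_lincomb UR_sum) auto

text \<open>The weak form of D: tested against w \<in> U(R), the projection disappears and each delta
  evaluates w.\<close>

lemma ipU_DU: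
  assumes fin: "finite l" and st: "\<forall>j<n. G j < G (Suc j)" and "u \<in> UR l G n" "w \<in> UR l G n"
  shows "ipU G n (DU l G n u) w
    = ipU G n (pder G n u) w + (\<Sum>m\<in>{1..<n}. jumpU G u m * gval G n w (G m))"
proof -
  define P where "P = projU l G n (pder G n u)"
  define \<delta> where "\<delta> m = deltaU l G n (G m)" for m
  have pder: "pder G n u \<in> PWC G n" by (rule pder_PWC[OF st assms(3)])
  have w: "w \<in> PWC G n" using assms(4) by (rule UR_imp_PWC)
  have P: "P \<in> PWC G n" "ipU G n P w = ipU G n (pder G n u) w"
    using projU_spec[OF fin st pder] assms(4) unfolding P_def by (auto intro: UR_imp_PWC)
  have \<delta>: "\<delta> m \<in> PWC G n" "ipU G n (\<delta> m) w = gval G n w (G m)" if "m < n" for m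
    using deltaU_spec[OF fin st that] assms(4) ipU_commute[of G n "\<delta> m"]
    unfolding \<delta>_def by (auto intro: UR_imp_PWC)
  define S where "S x = (\<Sum>m\<in>{1..<n}. jumpU G u m * \<delta> m x)" for x
  have S: "S \<in> PWC G n" unfolding S_def using \<delta>(1) by (intro PWC_sum) auto
  have "ipU G n (DU l G n u) w = ipU G n P w + ipU G n S w"
    unfolding DU_eq_lincomb P_def[symmetric] \<delta>_def[symmetric] S_def[symmetric]
    using ipU_lincomb_left[OF st P(1) S w, of 1 1] by simp
  also have "ipU G n S w = (\<Sum>m\<in>{1..<n}. jumpU G u m * gval G n w (G m))"
    unfolding S_def using \<delta> by (simp add: ipU_sum_left[OF st _ _ w])
  finally show ?thesis unfolding P(2) .
qed

lemma interval_integral_DU_grid: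
  assumes fin: "finite l" and one: "(\<lambda>x. 1) \<in> l" and st: "\<forall>j<n. G j < G (Suc j)"
    and u: "u \<in> UR l G n" and "i < k" "k \<le> n"
  shows "(LBINT x=G i..G k. DU l G n u x) = gval G n u (G k) - gval G n u (G i)"
proof -
  obtain v where v: "u = pw G n v" "\<forall>j<n. v j \<in> VC1 l" using u by (auto simp: UR_def)
  have "0 < n" using assms(5,6) by simp
  have cont: "\<forall>j<n. \<forall>x. isCont (v j) x" using v(2) VC1_isCont by blast
  define right where "right m = v (min m (n - 1)) (G m)" for m
  define left where "left m = v (m - 1) (G m)" for m
  define chi where "chi = grid_indicator G n i k"
  have chi: "chi \<in> UR l G n" unfolding chi_def by (rule grid_indicator_UR[OF fin one])
  have increments: "ipU G n (pder G n u) chi = (\<Sum>j\<in>{i..<k}. left (Suc j) - right j)"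
  proof -
    have "ipU G n (pder G n u) chi = (LBINT x=G i..G k. pder G n u x)"
      unfolding chi_def using assms(5,6)
      by (intro interval_integral_eq_ipU_grid_indicator[OF st pder_PWC[OF st u], symmetric]) auto
    also have "\<dots> = (\<Sum>j\<in>{i..<k}. v j (G (Suc j)) - v j (G j))"
      unfolding v(1) using assms(5,6) by (intro interval_integral_pder_pw[OF st v(2)]) auto
    also have "\<dots> = (\<Sum>j\<in>{i..<k}. left (Suc j) - right j)"
      using assms(6) by (intro sum.cong) (auto simp: right_def left_def min_def)
    finally show ?thesis .
  qed
  have jumps: "(\<Sum>m\<in>{1..<n}. jumpU G u m * gval G n chi (G m))
      = (\<Sum>m\<in>{1..<n}. (right m - left m) * ((of_bool (i \<le> m \<and> m < k) + of_bool (i < m \<and> m \<le> k)) / 2))"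
    unfolding chi_def v(1)
    by (intro sum.cong) (auto simp: jumpU_pw[OF st _ _ cont] gval_grid_indicator[OF st] right_def left_def)
  have gval: "gval G n u (G m) = (right m + left m) / 2" if "m \<le> n" for m
    unfolding v(1) right_def left_def by (rule gval_pw[OF st \<open>0 < n\<close> that cont])
  have "(LBINT x=G i..G k. DU l G n u x) = ipU G n (DU l G n u) chi"
    unfolding chi_def using assms(5,6) DU_UR[OF fin st u]
    by (intro interval_integral_eq_ipU_grid_indicator[OF st] UR_imp_PWC) auto
  also have "\<dots> = (right k + left k) / 2 - (right i + left i) / 2"
    unfolding ipU_DU[OF fin st u chi] increments jumps using assms(5,6) \<open>0 < n\<close>
    by (intro increments_plus_jumps_telescope) (auto simp: right_def left_def)
  also have "\<dots> = gval G n u (G k) - gval G n u (G i)"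
    using assms(5,6) by (simp only: gval less_imp_le)
  finally show ?thesis .
qed

lemma interval_integral_DU:
  assumes "finite l" "(\<lambda>x. 1) \<in> l" and st: "\<forall>j<n. G j < G (Suc j)"
    and "u \<in> UR l G n" "a \<in> G ` {..n}" "b \<in> G ` {..n}" "a < b"
  shows "(LBINT x=a..b. DU l G n u x) = gval G n u b - gval G n u a"
proof -
  obtain i k where ik: "i \<le> n" "a = G i" "k \<le> n" "b = G k" using assms(5,6) by auto
  then have "i < k" using grid_le[OF st, of k i] \<open>a < b\<close> by (metis not_less)
  then show ?thesis unfolding ik(2,4) using interval_integral_DU_grid assms(1-4) ik(3) by blast
qed

theorem mainTheorem11:
  fixes Lam :: "lam_idx filter"
    and eta beta :: "lam_idx \<Rightarrow> real"
    and gam :: "lam_idx \<Rightarrow> nat \<Rightarrow> real"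
    and L :: "lam_idx \<Rightarrow> nat"
    and u :: "lam_idx \<Rightarrow> real \<Rightarrow> real"
    and a b :: "lam_idx \<Rightarrow> real"
  assumes Lam: "fine_ultrafilter Lam"
    and eta: "infinitesimal_net Lam eta"
    and beta: "pos_infinite_net Lam beta"
    and grid: "eventually (\<lambda>l. gam l 0 = - beta l \<and> gam l (L l) = beta l \<and>
                  (\<forall>j<L l. 0 < gam l (Suc j) - gam l j \<and> gam l (Suc j) - gam l j < eta l)) Lam"
    and reals_in_grid: "\<forall>r::real. eventually (\<lambda>l. r \<in> gam l ` {..L l}) Lam"
    and u: "eventually (\<lambda>l. u l \<in> UR l (gam l) (L l)) Lam"
    and a: "eventually (\<lambda>l. a l \<in> gam l ` {..L l}) Lam"
    and b: "eventually (\<lambda>l. b l \<in> gam l ` {..L l}) Lam"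
    and ab: "eventually (\<lambda>l. a l < b l) Lam"
  shows "eventually (\<lambda>l. (LBINT x=a l..b l. DU l (gam l) (L l) (u l) x)
            = gval (gam l) (L l) (u l) (b l) - gval (gam l) (L l) (u l) (a l)) Lam"
proof -
  have fin: "eventually finite Lam" and "eventually (\<lambda>l. {\<lambda>x. 1} \<subseteq> l) Lam"
    using Lam unfolding fine_ultrafilter_def by blast+
  then have one: "eventually (\<lambda>l. (\<lambda>x. 1) \<in> l) Lam" by simp
  have st: "eventually (\<lambda>l. \<forall>j<L l. gam l j < gam l (Suc j)) Lam"
    using grid by (rule eventually_mono) auto
  show ?thesis
    using eventually_conj[OF fin eventually_conj[OF one eventually_conj[OF st
          eventually_conj[OF u eventually_conj[OF a eventually_conj[OF b ab]]]]]]
    by (rule eventually_mono) (blast intro: interval_integral_DU)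
qed

end
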